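(* Let $\theta:\mathbb{A}\to\mathbb{A}^\lambda$ be a primitive substitution satisfying the standing assumptions, and let $\widetilde\theta:\mathcal{X}\to\mathcal{X}^\lambda$ be its synchronizing part. Then (i) $c(\widetilde\theta)=1$; (ii) $\widetilde\theta$ is primitive; (iii) $h(\widetilde\theta)=1$.
   Context: Substitution $\theta:\mathbb{A}\to\mathbb{A}^\lambda$, $\lambda\ge2$, $\theta(a)=\theta(a)_0\cdots\theta(a)_{\lambda-1}$, iterates $\theta^k$; primitive: some $\theta^k(a)$ contains all letters for every $a$. Standing assumptions: $\theta(a_0)_0=a_0$, $\theta$ injective on letters, subshift infinite. For any primitive substitution $\zeta$ over $\mathbb{B}$: column number $c(\zeta)=\min_{k\ge1,0\le j<\lambda^k}|\{\zeta^k(b)_j:b\in\mathbb{B}\}|$; height $h(\zeta)=\max\{m\ge1:\gcd(m,\lambda)=1,\ m\mid\gcd\{r\ge1:v[r]=v[0]\}\}$ for a fixed point $v$ of a suitable power of $\zeta$. Synchronizing part: $\mathcal{X}$ is the set of $M\subset\mathbb{A}$ with $|M|=c(\theta)$ and $M=\{\theta^k(a)_j:a\in\mathbb{A}\}$ for some $k\ge1$, $0\le j<\lambda^k$. For $M\in\mathcal{X}$ and $0\le j<\lambda$, $\theta(M)_j:=\{\theta(a)_j:a\in M\}$ belongs to $\mathcal{X}$, and $\widetilde\theta(M):=\theta(M)_0\theta(M)_1\cdots\theta(M)_{\lambda-1}$ defines $\widetilde\theta:\mathcal{X}\to\mathcal{X}^\lambda$. *)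

theory Defs
  imports Main
begin

text \<open>A substitution of constant length l over an alphabet B is a map
  zeta :: 'b => nat => 'b, where zeta b j is the j-th letter of zeta(b), j < l.\<close>

definition is_subst :: "'b set \<Rightarrow> ('b \<Rightarrow> nat \<Rightarrow> 'b) \<Rightarrow> nat \<Rightarrow> bool" where
  "is_subst B \<zeta> l \<longleftrightarrow> finite B \<and> B \<noteq> {} \<and> (\<forall>b\<in>B. \<forall>j<l. \<zeta> b j \<in> B)"

text \<open>iter zeta l k b j is the j-th letter (j < l^k) of zeta^k(b).\<close>
fun iter :: "('b \<Rightarrow> nat \<Rightarrow> 'b) \<Rightarrow> nat \<Rightarrow> nat \<Rightarrow> 'b \<Rightarrow> nat \<Rightarrow> 'b" where
  "iter \<zeta> l 0 b j = b"
| "iter \<zeta> l (Suc k) b j = \<zeta> (iter \<zeta> l k b (j div l)) (j mod l)"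

definition primitive :: "'b set \<Rightarrow> ('b \<Rightarrow> nat \<Rightarrow> 'b) \<Rightarrow> nat \<Rightarrow> bool" where
  "primitive B \<zeta> l \<longleftrightarrow> (\<exists>k\<ge>1. \<forall>a\<in>B. \<forall>b\<in>B. \<exists>j<l^k. iter \<zeta> l k a j = b)"

definition column_number :: "'b set \<Rightarrow> ('b \<Rightarrow> nat \<Rightarrow> 'b) \<Rightarrow> nat \<Rightarrow> nat" where
  "column_number B \<zeta> l =
     Min {card ((\<lambda>b. iter \<zeta> l k b j) ` B) | k j. k \<ge> 1 \<and> j < l^k}"

definition fixed_point_pow :: "('b \<Rightarrow> nat \<Rightarrow> 'b) \<Rightarrow> nat \<Rightarrow> nat \<Rightarrow> (nat \<Rightarrow> 'b) \<Rightarrow> bool" where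
  "fixed_point_pow \<zeta> l p v \<longleftrightarrow> (\<forall>n. v n = iter \<zeta> l p (v (n div l^p)) (n mod l^p))"

definition height_of :: "nat \<Rightarrow> (nat \<Rightarrow> 'b) \<Rightarrow> nat" where
  "height_of l v = (GREATEST m. m \<ge> 1 \<and> coprime m l \<and> m dvd Gcd {r. r \<ge> 1 \<and> v r = v 0})"

definition language :: "'b set \<Rightarrow> ('b \<Rightarrow> nat \<Rightarrow> 'b) \<Rightarrow> nat \<Rightarrow> 'b list set" where
  "language B \<zeta> l = {w. \<exists>k a i. a \<in> B \<and> i + length w \<le> l^k \<and>
       w = map (\<lambda>t. iter \<zeta> l k a (i + t)) [0..<length w]}"

definition subshift :: "'b set \<Rightarrow> ('b \<Rightarrow> nat \<Rightarrow> 'b) \<Rightarrow> nat \<Rightarrow> (int \<Rightarrow> 'b) set" where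
  "subshift B \<zeta> l = {x. (\<forall>i. x i \<in> B) \<and>
       (\<forall>i n. map (\<lambda>t. x (i + int t)) [0..<n] \<in> language B \<zeta> l)}"

definition sync_alphabet :: "'a set \<Rightarrow> ('a \<Rightarrow> nat \<Rightarrow> 'a) \<Rightarrow> nat \<Rightarrow> 'a set set" where
  "sync_alphabet A \<theta> l = {M. card M = column_number A \<theta> l \<and>
       (\<exists>k\<ge>1. \<exists>j<l^k. M = (\<lambda>a. iter \<theta> l k a j) ` A)}"

definition sync_subst :: "('a \<Rightarrow> nat \<Rightarrow> 'a) \<Rightarrow> 'a set \<Rightarrow> nat \<Rightarrow> 'a set" where
  "sync_subst \<theta> M j = (\<lambda>a. \<theta> a j) ` M"

end

theory Submission
  imports Defs
begin

text \<open>Every M in the synchronizing alphabet is the image of A under some column of an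
  iterate and has the minimal size c, so any further column maps M onto a set of size at
  least c. Hence if a column of \<open>\<theta>\<^sup>k\<close> maps A onto some N of size c, the
  same column, even after extra \<open>\<theta>\<close>-steps, maps every M onto N. With
  \<open>\<theta>\<^sup>k\<close> for such a column this gives column number 1; appending it to a long enough
  prefix gives primitivity; and along a fixed point v with v(0) = N the positions
  \<open>l\<^sup>k + j\<close> and \<open>2 l\<^sup>k + j\<close> both return to v(0), so every return-time
  divisor coprime to l divides \<open>l\<^sup>k\<close>, i.e. the height is 1.
  None of primitivity of \<open>\<theta>\<close>, the fixed letter a0, injectivity or infinitude of the
  subshift is needed for this.\<close>

lemma mult_power_add_less:
  fixes j l :: nat
  assumes "j < l^k" "j' < l^k'"
  shows "j * l^k' + j' < l^(k + k')"
proof -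
  have "j * l^k' + j' < (j + 1) * l^k'" using assms(2) by simp
  also have "\<dots> \<le> l^k * l^k'" using assms(1) by (intro mult_right_mono) auto
  finally show ?thesis by (simp add: power_add)
qed

lemma iter_add:
  assumes "l > 0" "j2 < l^k2"
  shows "iter \<zeta> l (k1 + k2) b (j1 * l^k2 + j2) = iter \<zeta> l k2 (iter \<zeta> l k1 b j1) j2"
  using assms(2)
proof (induction k2 arbitrary: j2)
  case 0
  then show ?case by simp
next
  case (Suc k2)
  have split: "j1 * l^Suc k2 + j2 = j2 + (j1 * l^k2) * l" by (simp add: algebra_simps)
  have "j2 div l < l^k2"
    using Suc.prems assms(1) by (simp add: div_less_iff_less_mult mult.commute)
  then show ?case using Suc.IH assms(1) unfolding split by simp
qed

lemma iter_in:
  assumes "is_subst B \<zeta> l" "l > 0" "b \<in> B"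
  shows "iter \<zeta> l k b j \<in> B"
  using assms(3) by (induction k arbitrary: j) (use assms(1,2) in \<open>auto simp: is_subst_def\<close>)

lemma iter_sync_subst: "iter (sync_subst \<theta>) l k M j = (\<lambda>a. iter \<theta> l k a j) ` M"
  by (induction k arbitrary: j) (simp_all add: sync_subst_def image_image)

lemma finite_column_cards:
  assumes "finite B"
  shows "finite {card ((\<lambda>b. iter \<zeta> l k b j) ` B) | k j. k \<ge> 1 \<and> j < l^k}"
  by (rule finite_subset[of _ "{..card B}"]) (use card_image_le[OF assms] in auto)

lemma column_number_le:
  assumes "finite B" "k \<ge> 1" "j < l^k"
  shows "column_number B \<zeta> l \<le> card ((\<lambda>b. iter \<zeta> l k b j) ` B)"
  unfolding column_number_def
  by (rule Min_le[OF finite_column_cards[OF assms(1)]]) (use assms in blast)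

lemma column_number_attained:
  assumes "finite B" "l > 0"
  obtains k j where "k \<ge> 1" "j < l^k"
    "column_number B \<zeta> l = card ((\<lambda>b. iter \<zeta> l k b j) ` B)"
proof -
  have "{card ((\<lambda>b. iter \<zeta> l k b j) ` B) | k j. k \<ge> 1 \<and> j < l^k} \<noteq> {}"
    using assms(2) by force
  then have "column_number B \<zeta> l \<in> {card ((\<lambda>b. iter \<zeta> l k b j) ` B) | k j. k \<ge> 1 \<and> j < l^k}"
    unfolding column_number_def by (rule Min_in[OF finite_column_cards[OF assms(1)]])
  then show ?thesis using that by blast
qed

lemma column_number_eq_1:
  assumes "finite B" "B \<noteq> {}" "k \<ge> 1" "j < l^k" "\<And>b. b \<in> B \<Longrightarrow> iter \<zeta> l k b j = c"
  shows "column_number B \<zeta> l = 1"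
  unfolding column_number_def
proof (rule Min_eqI[OF finite_column_cards[OF assms(1)]])
  fix y assume "y \<in> {card ((\<lambda>b. iter \<zeta> l k b j) ` B) | k j. k \<ge> 1 \<and> j < l^k}"
  then show "1 \<le> y" using assms(1,2) by (auto simp: Suc_le_eq card_gt_0_iff)
next
  have "(\<lambda>b. iter \<zeta> l k b j) ` B = {c}" using assms(2,5) by auto
  then show "1 \<in> {card ((\<lambda>b. iter \<zeta> l k b j) ` B) | k j. k \<ge> 1 \<and> j < l^k}"
    using assms(3,4) by (intro CollectI exI[of _ k] exI[of _ j]) simp
qed

lemma sync_alphabet_subset:
  assumes "is_subst A \<theta> l" "l > 0" "M \<in> sync_alphabet A \<theta> l"
  shows "M \<subseteq> A"
  using assms iter_in[OF assms(1,2)] unfolding sync_alphabet_def by auto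

lemma finite_sync_alphabet:
  assumes "is_subst A \<theta> l" "l > 0"
  shows "finite (sync_alphabet A \<theta> l)"
proof -
  have "sync_alphabet A \<theta> l \<subseteq> Pow A" using sync_alphabet_subset[OF assms] by blast
  then show ?thesis using assms finite_subset unfolding is_subst_def by blast
qed

lemma sync_alphabet_nonempty:
  assumes "is_subst A \<theta> l" "l > 0"
  shows "sync_alphabet A \<theta> l \<noteq> {}"
proof -
  obtain k j where "k \<ge> 1" "j < l^k" "column_number A \<theta> l = card ((\<lambda>a. iter \<theta> l k a j) ` A)"
    using column_number_attained assms unfolding is_subst_def by metis
  then have "(\<lambda>a. iter \<theta> l k a j) ` A \<in> sync_alphabet A \<theta> l"
    unfolding sync_alphabet_def by auto
  then show ?thesis by blast
qed

lemma column_number_le_card_image_sync: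
  assumes "is_subst A \<theta> l" "l > 0" "M \<in> sync_alphabet A \<theta> l" "j < l^k"
  shows "column_number A \<theta> l \<le> card ((\<lambda>a. iter \<theta> l k a j) ` M)"
proof -
  obtain k0 j0 where k0: "k0 \<ge> 1" "j0 < l^k0" and M: "M = (\<lambda>a. iter \<theta> l k0 a j0) ` A"
    using assms(3) unfolding sync_alphabet_def by blast
  have "(\<lambda>a. iter \<theta> l k a j) ` M = (\<lambda>a. iter \<theta> l (k0 + k) a (j0 * l^k + j)) ` A"
    unfolding M image_image using iter_add[OF assms(2,4), of \<theta> k0] by simp
  moreover have "column_number A \<theta> l \<le> card ((\<lambda>a. iter \<theta> l (k0 + k) a (j0 * l^k + j)) ` A)"
    using assms(1) k0 mult_power_add_less[OF k0(2) assms(4)]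
    by (intro column_number_le) (auto simp: is_subst_def)
  ultimately show ?thesis by simp
qed

lemma image_iter_sync_alphabet:
  assumes "is_subst A \<theta> l" "l > 0" "M \<in> sync_alphabet A \<theta> l"
    and N: "(\<lambda>a. iter \<theta> l k a j) ` A \<in> sync_alphabet A \<theta> l"
    and "j < l^k" "j' < l^k'"
  shows "(\<lambda>a. iter \<theta> l (k' + k) a (j' * l^k + j)) ` M = (\<lambda>a. iter \<theta> l k a j) ` A"
    (is "?image = ?N")
proof (rule card_subset_eq)
  show "finite ?N" using assms(1) unfolding is_subst_def by simp
  have "?image = (\<lambda>a. iter \<theta> l k a j) ` (\<lambda>a. iter \<theta> l k' a j') ` M"
    unfolding image_image using iter_add[OF assms(2,5), of \<theta> k'] by simp
  then show "?image \<subseteq> ?N"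
    using sync_alphabet_subset[OF assms(1-3)] iter_in[OF assms(1,2)] by auto
  have "column_number A \<theta> l \<le> card ?image"
    using mult_power_add_less[OF assms(6,5)]
    by (intro column_number_le_card_image_sync[OF assms(1-3)]) (simp add: add.commute)
  moreover have "card ?N = column_number A \<theta> l" using N unfolding sync_alphabet_def by simp
  moreover note card_mono[OF \<open>finite ?N\<close> \<open>?image \<subseteq> ?N\<close>]
  ultimately show "card ?image = card ?N" by simp
qed

lemma sync_alphabet_column:
  assumes "N \<in> sync_alphabet A \<theta> l"
  obtains k j where "k \<ge> 1" "j < l^k" "N = (\<lambda>a. iter \<theta> l k a j) ` A"
  using assms that unfolding sync_alphabet_def by blast

lemma column_number_sync_subst:
  assumes "is_subst A \<theta> l" "l > 0"
  shows "column_number (sync_alphabet A \<theta> l) (sync_subst \<theta>) l = 1"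
proof -
  obtain N where N: "N \<in> sync_alphabet A \<theta> l" using sync_alphabet_nonempty[OF assms] by blast
  then obtain k j where kj: "k \<ge> 1" "j < l^k" "N = (\<lambda>a. iter \<theta> l k a j) ` A"
    by (rule sync_alphabet_column)
  show ?thesis
  proof (rule column_number_eq_1[OF finite_sync_alphabet[OF assms] _ kj(1,2)])
    show "sync_alphabet A \<theta> l \<noteq> {}" using N by blast
    fix M assume "M \<in> sync_alphabet A \<theta> l"
    from image_iter_sync_alphabet[OF assms this _ kj(2), of 0 0] N kj(3)
    show "iter (sync_subst \<theta>) l k M j = N" by (simp add: iter_sync_subst)
  qed
qed

lemma primitive_sync_subst:
  assumes "is_subst A \<theta> l" "l > 0"
  shows "primitive (sync_alphabet A \<theta> l) (sync_subst \<theta>) l"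
proof -
  let ?X = "sync_alphabet A \<theta> l"
  have "\<forall>N\<in>?X. \<exists>k j. k \<ge> 1 \<and> j < l^k \<and> N = (\<lambda>a. iter \<theta> l k a j) ` A"
    using sync_alphabet_column by metis
  then obtain kN jN where col: "\<And>N. N \<in> ?X \<Longrightarrow>
      kN N \<ge> 1 \<and> jN N < l^kN N \<and> N = (\<lambda>a. iter \<theta> l (kN N) a (jN N)) ` A"
    by metis
  define K where "K = Suc (Max (kN ` ?X))"
  show ?thesis
    unfolding primitive_def
  proof (rule exI[of _ K], intro conjI ballI)
    show "1 \<le> K" unfolding K_def by simp
    fix M N assume M: "M \<in> ?X" and N: "N \<in> ?X"
    have "kN N < K"
      using N finite_sync_alphabet[OF assms] unfolding K_def by (simp add: le_imp_less_Suc)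
    then have K: "K = (K - kN N) + kN N" by simp
    have "l^kN N \<le> l^K" using \<open>kN N < K\<close> assms(2) by (intro power_increasing) auto
    then have "jN N < l^K" using col[OF N] by linarith
    have "iter (sync_subst \<theta>) l K M (jN N)
        = (\<lambda>a. iter \<theta> l ((K - kN N) + kN N) a (0 * l^kN N + jN N)) ` M"
      by (simp add: iter_sync_subst flip: K)
    also have "\<dots> = N"
      using image_iter_sync_alphabet[OF assms M _ _, of "kN N" "jN N" 0 "K - kN N"] col[OF N] N
        assms(2) by simp
    finally have "iter (sync_subst \<theta>) l K M (jN N) = N" .
    with \<open>jN N < l^K\<close> show "\<exists>j<l^K. iter (sync_subst \<theta>) l K M j = N" by blast
  qed
qed

lemma fixed_point_pow_iter:
  assumes "fixed_point_pow \<zeta> l p v" "l > 0" "n < l^(p * q)"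
  shows "v n = iter \<zeta> l (p * q) (v 0) n"
  using assms(3)
proof (induction q arbitrary: n)
  case (Suc q)
  have "n div l^p < l^(p * q)"
    using Suc.prems assms(2) by (simp add: div_less_iff_less_mult power_add[symmetric] algebra_simps)
  moreover have "n mod l^p < l^p" using assms(2) by simp
  ultimately have "iter \<zeta> l p (iter \<zeta> l (p * q) (v 0) (n div l^p)) (n mod l^p)
      = iter \<zeta> l (p * Suc q) (v 0) n"
    using iter_add[OF assms(2), of "n mod l^p" p \<zeta> "p * q" _ "n div l^p"]
    by (simp add: algebra_simps)
  moreover have "v n = iter \<zeta> l p (v (n div l^p)) (n mod l^p)"
    using assms(1) unfolding fixed_point_pow_def by blast
  ultimately show ?case using Suc.IH[OF \<open>n div l^p < l^(p * q)\<close>] by simp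
qed simp

lemma height_of_eq_1:
  fixes l :: nat
  assumes "r \<ge> 1" "v r = v 0" "v (r + l^k) = v 0"
  shows "height_of l v = 1"
  unfolding height_of_def
proof (rule Greatest_equality)
  fix m assume m: "m \<ge> 1 \<and> coprime m l \<and> m dvd Gcd {r. r \<ge> 1 \<and> v r = v 0}"
  have "Gcd {r. r \<ge> 1 \<and> v r = v 0} dvd (r + l^k) - r"
    using assms by (intro dvd_diff_nat Gcd_dvd) auto
  then have "m dvd l^k" using m dvd_trans by auto
  moreover have "coprime m (l^k)" using m by simp
  ultimately show "m \<le> 1" using coprime_common_divisor[of m "l^k" m] by simp
qed simp

lemma height_sync_subst:
  assumes "is_subst A \<theta> l" "l \<ge> 2" "p \<ge> 1"
    and v: "\<And>n. v n \<in> sync_alphabet A \<theta> l" and fix_v: "fixed_point_pow (sync_subst \<theta>) l p v"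
  shows "height_of l v = 1"
proof -
  have l: "l > 0" using assms(2) by simp
  obtain k j where kj: "k \<ge> 1" "j < l^k" "v 0 = (\<lambda>a. iter \<theta> l k a j) ` A"
    using sync_alphabet_column[OF v] by metis
  define K where "K = p * (k + 2)"
  have K: "K = (K - k) + k" "K - k \<ge> 2"
    using mult_le_mono1[OF assms(3), of "k + 2"] unfolding K_def by auto
  have "(2::nat) < 2^2" by simp
  also have "\<dots> \<le> l^2" by (rule power_mono) (use assms(2) in auto)
  also have "\<dots> \<le> l^(K - k)" using K(2) l by (simp add: power_increasing)
  finally have two_less: "2 < l^(K - k)" .
  have return: "v (i * l^k + j) = v 0" if "i \<le> 2" for i
  proof -
    have i: "i < l^(K - k)" using that two_less by simp
    then have "i * l^k + j < l^K" using mult_power_add_less[OF i kj(2)] K(1) by simp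
    then have "v (i * l^k + j) = (\<lambda>a. iter \<theta> l K a (i * l^k + j)) ` v 0"
      using fixed_point_pow_iter[OF fix_v l, of _ "k + 2"] unfolding K_def
      by (simp add: iter_sync_subst)
    also have "\<dots> = v 0"
      using image_iter_sync_alphabet[OF assms(1) l v[of 0] _ kj(2) i] v[of 0] kj(3)
      by (simp flip: K(1))
    finally show ?thesis .
  qed
  have "v (l^k + j) = v 0" using return[of 1] by simp
  moreover have "v ((l^k + j) + l^k) = v 0"
    using return[of 2] by (simp add: mult_2 add.commute add.left_commute)
  ultimately show ?thesis using l by (intro height_of_eq_1) (simp_all add: Suc_le_eq)
qed

theorem mainTheorem11:
  fixes A :: "'a set" and \<theta> :: "'a \<Rightarrow> nat \<Rightarrow> 'a" and l :: nat and a0 :: 'a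
  assumes "is_subst A \<theta> l"
    and "l \<ge> 2"
    and "primitive A \<theta> l"
    and "a0 \<in> A" and "\<theta> a0 0 = a0"
    and "\<forall>a\<in>A. \<forall>b\<in>A. (\<forall>j<l. \<theta> a j = \<theta> b j) \<longrightarrow> a = b"
    and "infinite (subshift A \<theta> l)"
  shows "column_number (sync_alphabet A \<theta> l) (sync_subst \<theta>) l = 1
    \<and> primitive (sync_alphabet A \<theta> l) (sync_subst \<theta>) l
    \<and> (\<forall>p\<ge>1. \<forall>v. (\<forall>n. v n \<in> sync_alphabet A \<theta> l) \<longrightarrow>
          fixed_point_pow (sync_subst \<theta>) l p v \<longrightarrow> height_of l v = 1)"
proof -
  have "l > 0" using assms(2) by simp
  then show ?thesis
    using column_number_sync_subst primitive_sync_subst height_sync_subst assms(1,2)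
    by blast
qed

end
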